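(* Let $u\geq 1$, $a=(-u,-1)$, $b=(u,1)$, $h(x)=-u/x$, and fix $x\in(-u,0)$. Then for all $p\neq 0$ close enough to zero, whenever $y_p>1$ and $(x,y_p)\in B_p(a,b)$, both $y_p$ and $h(x)$ lie in the open interval $(1,\,2h(x)+3)$.
   Context: For $p\neq 0$ and $(x,y)\in\mathbb{R}^2$ let $L_p((x,y))=(|x|^p+|y|^p)^{1/p}$; for $p<0$ this is extended by setting $L_p((x,y))=0$ whenever $x=0$ or $y=0$. The bisector is $B_p(a,b)=\{q\in\mathbb{R}^2: L_p(a-q)=L_p(b-q)\}$. *)

theory Defs
  imports "HOL-Analysis.Analysis"
begin

text \<open>The L_p "norm" on R^2 for p \<noteq> 0; for p < 0 it is set to 0 when a coordinate vanishes.\<close>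
definition Lp :: "real \<Rightarrow> real \<times> real \<Rightarrow> real" where
  "Lp p q = (if p < 0 \<and> (fst q = 0 \<or> snd q = 0) then 0
             else (\<bar>fst q\<bar> powr p + \<bar>snd q\<bar> powr p) powr (1 / p))"

definition bisector :: "real \<Rightarrow> real \<times> real \<Rightarrow> real \<times> real \<Rightarrow> (real \<times> real) set" where
  "bisector p a b = {q. Lp p (a - q) = Lp p (b - q)}"

end

theory Submission
  imports Defs
begin

text \<open>
  For \<open>y > 1\<close> and \<open>-u < x < 0\<close> no coordinate difference vanishes, so \<open>(x, y) \<in> B\<^sub>p(a, b)\<close>
  reads \<open>G\<^sub>p(y) = (u - x)\<^sup>p - (u + x)\<^sup>p\<close> with \<open>G\<^sub>p(t) = (t + 1)\<^sup>p - (t - 1)\<^sup>p\<close>, and \<open>p G\<^sub>p\<close> is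
  nonincreasing on \<open>(1, \<infinity>)\<close> when \<open>p < 1\<close>. As \<open>p \<rightarrow> 0\<close>, \<open>(G\<^sub>p(Y) - (u - x)\<^sup>p + (u + x)\<^sup>p) / p\<close>
  tends to \<open>ln ((Y + 1) / (Y - 1)) - ln ((u - x) / (u + x))\<close>, which is negative exactly when
  \<open>Y > -u / x = h(x)\<close>. For such \<open>Y\<close> and small \<open>p\<close> this gives \<open>p G\<^sub>p(Y) < p G\<^sub>p(y)\<close>, hence
  \<open>y < Y\<close>; the theorem takes \<open>Y = 2 h(x) + 3\<close>.
\<close>

lemma tendsto_powr_diff_over_exponent:
  fixes a b :: real
  assumes "a > 0" "b > 0"
  shows "((\<lambda>p. (a powr p - b powr p) / p) \<longlongrightarrow> ln a - ln b) (at 0)"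
proof -
  have "((\<lambda>p. a powr p - b powr p) has_field_derivative ln a - ln b) (at 0)"
    using assms by (auto intro!: derivative_eq_intros DERIV_powr)
  then show ?thesis
    using assms by (simp add: has_field_derivative_iff)
qed

lemma Lp_eq_iff_powr_sums_eq:
  assumes "p \<noteq> 0" and "fst q \<noteq> 0" "snd q \<noteq> 0" "fst r \<noteq> 0" "snd r \<noteq> 0"
  shows "Lp p q = Lp p r \<longleftrightarrow>
    \<bar>fst q\<bar> powr p + \<bar>snd q\<bar> powr p = \<bar>fst r\<bar> powr p + \<bar>snd r\<bar> powr p"
proof -
  have root_inj: "s powr (1 / p) = t powr (1 / p) \<longleftrightarrow> s = t"
    if "s > 0" "t > 0" for s t :: real
  proof
    assume "s powr (1 / p) = t powr (1 / p)"
    then have "(s powr (1 / p)) powr p = (t powr (1 / p)) powr p" by simp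
    then show "s = t" using assms(1) that by (simp add: powr_powr)
  qed simp
  show ?thesis
    using assms by (simp add: Lp_def root_inj add_pos_pos)
qed

lemma bisector_pair_eq:
  fixes u x y p :: real
  assumes "p \<noteq> 0" "\<bar>x\<bar> < u" "y > 1"
    and "(x, y) \<in> bisector p (- u, - 1) (u, 1)"
  shows "(u + x) powr p + (y + 1) powr p = (u - x) powr p + (y - 1) powr p"
  using assms Lp_eq_iff_powr_sums_eq[of p "(- u, - 1) - (x, y)" "(u, 1) - (x, y)"]
  by (simp add: bisector_def abs_if add.commute split: if_splits)

lemma powr_gap_antimono:
  fixes p s t :: real
  assumes "p < 1" "1 < s" "s \<le> t"
  shows "p * ((t + 1) powr p - (t - 1) powr p) \<le> p * ((s + 1) powr p - (s - 1) powr p)"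
proof (rule DERIV_nonpos_imp_nonincreasing[OF assms(3)])
  fix r assume "s \<le> r" "r \<le> t"
  then have "r > 1" using assms by simp
  have "DERIV (\<lambda>r. p * ((r + 1) powr p - (r - 1) powr p)) r :>
        p\<^sup>2 * ((r + 1) powr (p - 1) - (r - 1) powr (p - 1))"
    using \<open>r > 1\<close>
    by (auto intro!: derivative_eq_intros DERIV_fun_powr simp: power2_eq_square algebra_simps)
  moreover have "(r + 1) powr (p - 1) \<le> (r - 1) powr (p - 1)"
    using \<open>r > 1\<close> assms(1) by (intro powr_mono2') auto
  then have "p\<^sup>2 * ((r + 1) powr (p - 1) - (r - 1) powr (p - 1)) \<le> 0"
    by (simp add: mult_nonneg_nonpos)
  ultimately show "\<exists>d. DERIV (\<lambda>r. p * ((r + 1) powr p - (r - 1) powr p)) r :> d \<and> d \<le> 0"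
    by blast
qed

lemma eventually_powr_gap_less:
  fixes a c Y :: real
  assumes "a > 0" "c > 0" "Y > 1" "(Y + 1) * a < c * (Y - 1)"
  shows "\<forall>\<^sub>F p in at 0. p * ((Y + 1) powr p - (Y - 1) powr p) < p * (c powr p - a powr p)"
proof -
  have "ln ((Y + 1) * a) < ln (c * (Y - 1))"
    using assms by (intro ln_less_cancel_iff[THEN iffD2]) auto
  then have "ln (Y + 1) - ln (Y - 1) - (ln c - ln a) < 0"
    using assms(1-3) by (simp add: ln_mult)
  moreover have "((\<lambda>p. ((Y + 1) powr p - (Y - 1) powr p) / p - (c powr p - a powr p) / p)
      \<longlongrightarrow> ln (Y + 1) - ln (Y - 1) - (ln c - ln a)) (at 0)"
    using assms(1-3) by (intro tendsto_diff tendsto_powr_diff_over_exponent) auto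
  ultimately have "\<forall>\<^sub>F p in at 0.
      ((Y + 1) powr p - (Y - 1) powr p) / p - (c powr p - a powr p) / p < 0"
    by (intro order_tendstoD(2)) auto
  then show ?thesis
    by (rule eventually_mono)
      (auto simp flip: diff_divide_distrib simp: divide_less_0_iff mult_less_0_iff)
qed

lemma eventually_bisector_below:
  fixes u x Y :: real
  assumes "- u < x" "x < 0" "- u / x < Y"
  shows "\<forall>\<^sub>F p in at 0. \<forall>y > 1. (x, y) \<in> bisector p (- u, - 1) (u, 1) \<longrightarrow> y < Y"
proof -
  have "- u / x > 1"
    using assms(1,2) by (simp add: field_simps)
  then have "Y > 1"
    using assms(3) by linarith
  moreover have "(Y + 1) * (u + x) < (u - x) * (Y - 1)"
    using assms(2,3) by (simp add: field_simps)
  ultimately have "\<forall>\<^sub>F p in at 0.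
      p * ((Y + 1) powr p - (Y - 1) powr p) < p * ((u - x) powr p - (u + x) powr p)"
    using assms(1,2) by (intro eventually_powr_gap_less) auto
  moreover have "\<forall>\<^sub>F p in at 0. p < (1::real)"
    by (intro order_tendstoD(2)[OF tendsto_ident_at]) simp
  moreover have "\<forall>\<^sub>F p in at 0. p \<noteq> (0::real)"
    by (rule eventually_neq_at_within)
  ultimately show ?thesis
  proof eventually_elim
    case (elim p)
    show ?case
    proof (intro allI impI, rule ccontr)
      fix y assume "1 < y" "(x, y) \<in> bisector p (- u, - 1) (u, 1)" "\<not> y < Y"
      then have "(u + x) powr p + (y + 1) powr p = (u - x) powr p + (y - 1) powr p"
        using bisector_pair_eq[of p x u y] elim(3) assms(1,2) by auto
      then have "(y + 1) powr p - (y - 1) powr p = (u - x) powr p - (u + x) powr p"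
        by linarith
      then have "p * ((y + 1) powr p - (y - 1) powr p) = p * ((u - x) powr p - (u + x) powr p)"
        by simp
      moreover have "p * ((y + 1) powr p - (y - 1) powr p)
          \<le> p * ((Y + 1) powr p - (Y - 1) powr p)"
        using powr_gap_antimono[of p Y y] elim(2) \<open>Y > 1\<close> \<open>\<not> y < Y\<close> by simp
      ultimately show False
        using elim(1) by linarith
    qed
  qed
qed

theorem lemma6:
  fixes u x :: real and h :: "real \<Rightarrow> real"
  assumes "u \<ge> 1"
    and "h = (\<lambda>t. - u / t)"
    and "- u < x" and "x < 0"
  shows "\<exists>\<delta>>0. \<forall>p. p \<noteq> 0 \<and> \<bar>p\<bar> < \<delta> \<longrightarrow>
           (\<forall>y. y > 1 \<and> (x, y) \<in> bisector p (- u, - 1) (u, 1) \<longrightarrow>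
              (1 < y \<and> y < 2 * h x + 3) \<and> (1 < h x \<and> h x < 2 * h x + 3))"
proof -
  have "h x > 1"
    using assms(2-4) by (simp add: field_simps)
  then have "- u / x < 2 * h x + 3"
    using assms(2) by simp
  then have "\<forall>\<^sub>F p in at 0.
      \<forall>y > 1. (x, y) \<in> bisector p (- u, - 1) (u, 1) \<longrightarrow> y < 2 * h x + 3"
    using assms(3,4) by (rule eventually_bisector_below[rotated 2])
  then obtain \<delta> where "\<delta> > 0"
    and "\<And>p y. p \<noteq> 0 \<Longrightarrow> \<bar>p\<bar> < \<delta> \<Longrightarrow> y > 1 \<Longrightarrow>
      (x, y) \<in> bisector p (- u, - 1) (u, 1) \<Longrightarrow> y < 2 * h x + 3"
    unfolding eventually_at by (auto simp: dist_real_def)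
  with \<open>h x > 1\<close> show ?thesis
    by auto
qed

end
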